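(* In Ruleset A, Ruleset B and Ruleset D, the Quantum variation of Nim on at most $k$ heaps is equivalent to the corresponding game in which only superpositions of at most $k$ classical moves are allowed (i.e. each Q-move is a set of at most $k$ classical moves, with the same ruleset's conditions otherwise).
   Context: Nim: $\mathrm{Nim}(x_1,\ldots,x_k)$ is the position with heaps of $x_1,\ldots,x_k$ tokens; the classical move $(i,-j)$ with $j\ge1$ removes $j$ tokens from heap $i$ and is illegal if heap $i$ has fewer than $j$ tokens; normal play. Quantum variation: a position is a nonempty finite set $\langle G_1,\ldots,G_n\rangle$ of classical positions. A classical move $m$ is legal if legal in some $G_i$. A Q-move is a nonempty set $\{m_1,\ldots,m_k\}$ of legal classical moves, leading to the superposition of all legal results $\Gamma(G_i,m_j)$. Ruleset A: only Q-moves with at least two classical moves allowed. Ruleset B: same, except when the player has exactly one legal classical move overall he may play it alone. Ruleset D: all Q-moves allowed. The player with no allowed Q-move loses. $G\equiv H$ means $G+X$ and $H+X$ have the same outcome for every game $X$ (disjunctive sum). *)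

theory Defs
  imports Main
begin

inductive nposn and pposn for opts :: "'p \<Rightarrow> 'p set" where
  nposnI: "p' \<in> opts p \<Longrightarrow> pposn opts p' \<Longrightarrow> nposn opts p"
| pposnI: "(\<forall>p'\<in>opts p. nposn opts p') \<Longrightarrow> pposn opts p"

text \<open>Arbitrary (short) impartial games as finite game trees.\<close>
datatype gtree = GT "gtree list"

fun gt_opts :: "gtree \<Rightarrow> gtree set" where
  "gt_opts (GT xs) = set xs"

definition sum_opts :: "('a \<Rightarrow> 'a set) \<Rightarrow> ('b \<Rightarrow> 'b set) \<Rightarrow> 'a \<times> 'b \<Rightarrow> ('a \<times> 'b) set" where
  "sum_opts f g p = (\<lambda>a'. (a', snd p)) ` f (fst p) \<union> (\<lambda>b'. (fst p, b')) ` g (snd p)"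

definition game_equiv :: "('a \<Rightarrow> 'a set) \<Rightarrow> 'a \<Rightarrow> ('b \<Rightarrow> 'b set) \<Rightarrow> 'b \<Rightarrow> bool" where
  "game_equiv f a g b \<longleftrightarrow>
     (\<forall>X. (nposn (sum_opts f gt_opts) (a, X) \<longleftrightarrow> nposn (sum_opts g gt_opts) (b, X)) \<and>
          (pposn (sum_opts f gt_opts) (a, X) \<longleftrightarrow> pposn (sum_opts g gt_opts) (b, X)))"

text \<open>Classical Nim position: list of heap sizes. Classical move (i, j) means
  remove j tokens from heap i (0-indexed).\<close>
definition legal :: "nat \<times> nat \<Rightarrow> nat list \<Rightarrow> bool" where
  "legal m g \<longleftrightarrow> 1 \<le> snd m \<and> fst m < length g \<and> snd m \<le> g ! fst m"

definition apply_move :: "nat list \<Rightarrow> nat \<times> nat \<Rightarrow> nat list" where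
  "apply_move g m = g[fst m := g ! fst m - snd m]"

text \<open>Quantum position: a (nonempty, finite) set of classical positions.\<close>
definition legal_moves :: "nat list set \<Rightarrow> (nat \<times> nat) set" where
  "legal_moves Q = {m. \<exists>g\<in>Q. legal m g}"

definition qresult :: "nat list set \<Rightarrow> (nat \<times> nat) set \<Rightarrow> nat list set" where
  "qresult Q M = {apply_move g m | g m. g \<in> Q \<and> m \<in> M \<and> legal m g}"

datatype ruleset = RA | RB | RD

definition allowed :: "ruleset \<Rightarrow> nat list set \<Rightarrow> (nat \<times> nat) set \<Rightarrow> bool" where
  "allowed r Q M \<longleftrightarrow> finite M \<and> M \<noteq> {} \<and> M \<subseteq> legal_moves Q \<and>
     (case r of
        RA \<Rightarrow> 2 \<le> card M
      | RB \<Rightarrow> 2 \<le> card M \<or> (card M = 1 \<and> card (legal_moves Q) = 1)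
      | RD \<Rightarrow> True)"

definition qopts :: "ruleset \<Rightarrow> (nat \<Rightarrow> bool) \<Rightarrow> nat list set \<Rightarrow> nat list set set" where
  "qopts r sz Q = {qresult Q M | M. allowed r Q M \<and> sz (card M)}"

end

theory Submission imports Defs begin

text \<open>A Q-move M from Q can be replaced by the set of its minimal members, one per heap:
  removing fewer tokens keeps every heap at least as large, and since there are at most k
  heaps at most k classical moves remain. The resulting quantum position is a subset of the
  original one that dominates it heapwise, and this relation (with the same legal moves on
  both sides) is a bisimulation between the unrestricted and the restricted game; bisimilar
  positions are equivalent in every disjunctive sum.\<close>

definition game_bisim :: "('a \<Rightarrow> 'b \<Rightarrow> bool) \<Rightarrow> ('a \<Rightarrow> 'a set) \<Rightarrow> ('b \<Rightarrow> 'b set) \<Rightarrow> bool" where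
  "game_bisim S f g \<longleftrightarrow>
     (\<forall>a b. S a b \<longrightarrow> (\<forall>a'\<in>f a. \<exists>b'\<in>g b. S a' b') \<and> (\<forall>b'\<in>g b. \<exists>a'\<in>f a. S a' b'))"

lemma game_bisim_conversep: "game_bisim S f g \<Longrightarrow> game_bisim S\<inverse>\<inverse> g f"
  unfolding game_bisim_def by blast

lemma game_bisim_sum_outcome:
  assumes bisim: "game_bisim S f g"
  shows "nposn (sum_opts f h) p \<Longrightarrow> \<forall>b. S (fst p) b \<longrightarrow> nposn (sum_opts g h) (b, snd p)"
    and "pposn (sum_opts f h) p \<Longrightarrow> \<forall>b. S (fst p) b \<longrightarrow> pposn (sum_opts g h) (b, snd p)"
proof (induct rule: nposn_pposn.inducts)
  case (nposnI p' p)
  show ?case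
  proof (intro allI impI)
    fix b assume Sb: "S (fst p) b"
    from nposnI(1) consider (left) a' where "a' \<in> f (fst p)" "p' = (a', snd p)"
      | (right) x' where "x' \<in> h (snd p)" "p' = (fst p, x')"
      unfolding sum_opts_def by auto
    then show "nposn (sum_opts g h) (b, snd p)"
    proof cases
      case left
      then obtain b' where "b' \<in> g b" "S a' b'" using bisim Sb unfolding game_bisim_def by blast
      then have "(b', snd p) \<in> sum_opts g h (b, snd p)" "pposn (sum_opts g h) (b', snd p)"
        using nposnI(3) left unfolding sum_opts_def by auto
      then show ?thesis by (rule nposn_pposn.nposnI)
    next
      case right
      then have "(b, x') \<in> sum_opts g h (b, snd p)" "pposn (sum_opts g h) (b, x')"
        using nposnI(3) Sb unfolding sum_opts_def by auto
      then show ?thesis by (rule nposn_pposn.nposnI)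
    qed
  qed
next
  case (pposnI p)
  show ?case
  proof (intro allI impI)
    fix b assume Sb: "S (fst p) b"
    show "pposn (sum_opts g h) (b, snd p)"
    proof (rule nposn_pposn.pposnI, rule ballI)
      fix q assume "q \<in> sum_opts g h (b, snd p)"
      then consider (left) b' where "b' \<in> g b" "q = (b', snd p)"
        | (right) x' where "x' \<in> h (snd p)" "q = (b, x')"
        unfolding sum_opts_def by auto
      then show "nposn (sum_opts g h) q"
      proof cases
        case left
        then obtain a' where "a' \<in> f (fst p)" "S a' b'" using bisim Sb unfolding game_bisim_def by blast
        then have "(a', snd p) \<in> sum_opts f h p" unfolding sum_opts_def by (cases p) auto
        then show ?thesis using pposnI \<open>S a' b'\<close> left by auto
      next
        case right
        then have "(fst p, x') \<in> sum_opts f h p" unfolding sum_opts_def by (cases p) auto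
        then show ?thesis using pposnI Sb right by auto
      qed
    qed
  qed
qed

lemma game_equiv_if_bisim:
  assumes "game_bisim S f g" and "S a b"
  shows "game_equiv f a g b"
  unfolding game_equiv_def
proof
  fix X
  note forward = game_bisim_sum_outcome[OF assms(1), where h = gt_opts and p = "(a, X)"]
  note backward = game_bisim_sum_outcome[OF game_bisim_conversep[OF assms(1)],
      where h = gt_opts and p = "(b, X)"]
  show "(nposn (sum_opts f gt_opts) (a, X) \<longleftrightarrow> nposn (sum_opts g gt_opts) (b, X)) \<and>
        (pposn (sum_opts f gt_opts) (a, X) \<longleftrightarrow> pposn (sum_opts g gt_opts) (b, X))"
    using forward backward \<open>S a b\<close> by auto
qed

definition heaps_le :: "nat list \<Rightarrow> nat list \<Rightarrow> bool" where
  "heaps_le x y \<longleftrightarrow> length x = length y \<and> (\<forall>i<length x. x ! i \<le> y ! i)"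

definition moves_cover :: "(nat \<times> nat) set \<Rightarrow> (nat \<times> nat) set \<Rightarrow> bool" where
  "moves_cover M' M \<longleftrightarrow> (\<forall>m\<in>M. \<exists>m'\<in>M'. fst m' = fst m \<and> snd m' \<le> snd m)"

definition dominating_subset :: "nat \<Rightarrow> nat list set \<Rightarrow> nat list set \<Rightarrow> bool" where
  "dominating_subset k P Q \<longleftrightarrow>
     Q \<subseteq> P \<and> (\<forall>x\<in>P. \<exists>y\<in>Q. heaps_le x y) \<and> (\<forall>x\<in>P. length x \<le> k)"

lemma moves_cover_refl: "moves_cover M M"
  unfolding moves_cover_def by blast

lemma legal_heaps_le: "legal m x \<Longrightarrow> heaps_le x y \<Longrightarrow> legal m y"
  unfolding legal_def heaps_le_def by force

lemma heaps_le_apply_move: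
  assumes "legal m x" and "heaps_le x y" and "fst m' = fst m" and "snd m' \<le> snd m"
  shows "heaps_le (apply_move x m) (apply_move y m')"
  using assms unfolding legal_def heaps_le_def apply_move_def by (auto simp: nth_list_update)

lemma dominating_subset_refl: "\<forall>x\<in>Q. length x \<le> k \<Longrightarrow> dominating_subset k Q Q"
  unfolding dominating_subset_def heaps_le_def by auto

lemma dominating_subset_legal_moves:
  "dominating_subset k P Q \<Longrightarrow> legal_moves P = legal_moves Q"
  unfolding dominating_subset_def legal_moves_def using legal_heaps_le by blast

lemma allowed_cong_legal_moves:
  "legal_moves P = legal_moves Q \<Longrightarrow> allowed r P M = allowed r Q M"
  unfolding allowed_def by (simp split: ruleset.split)

lemma allowed_snd_pos: "allowed r Q M \<Longrightarrow> m \<in> M \<Longrightarrow> 1 \<le> snd m"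
  unfolding allowed_def legal_moves_def legal_def by auto

lemma dominating_subset_qresult:
  assumes dom: "dominating_subset k P Q" and "M' \<subseteq> M" and pos: "\<forall>m\<in>M'. 1 \<le> snd m"
    and cover: "moves_cover M' M"
  shows "dominating_subset k (qresult P M) (qresult Q M')"
  unfolding dominating_subset_def
proof (intro conjI ballI)
  show "qresult Q M' \<subseteq> qresult P M"
    using dom \<open>M' \<subseteq> M\<close> unfolding dominating_subset_def qresult_def by blast
next
  fix x assume "x \<in> qresult P M"
  then obtain g m where x: "x = apply_move g m" and "g \<in> P" "m \<in> M" "legal m g"
    unfolding qresult_def by blast
  obtain y where "y \<in> Q" "heaps_le g y" using dom \<open>g \<in> P\<close> unfolding dominating_subset_def by blast
  obtain m' where m': "m' \<in> M'" "fst m' = fst m" "snd m' \<le> snd m"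
    using cover \<open>m \<in> M\<close> unfolding moves_cover_def by blast
  have "legal m' y"
    using \<open>legal m g\<close> \<open>heaps_le g y\<close> m' pos unfolding legal_def heaps_le_def by force
  then have "apply_move y m' \<in> qresult Q M'" using \<open>y \<in> Q\<close> m' unfolding qresult_def by blast
  moreover have "heaps_le x (apply_move y m')"
    using heaps_le_apply_move[OF \<open>legal m g\<close> \<open>heaps_le g y\<close> m'(2,3)] x by simp
  ultimately show "\<exists>y\<in>qresult Q M'. heaps_le x y" by blast
next
  fix x assume "x \<in> qresult P M"
  then show "length x \<le> k" using dom unfolding qresult_def dominating_subset_def apply_move_def by auto
qed

definition minimal_moves :: "(nat \<times> nat) set \<Rightarrow> (nat \<times> nat) set" where
  "minimal_moves M = {m\<in>M. \<forall>m'\<in>M. fst m' = fst m \<longrightarrow> snd m \<le> snd m'}"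

lemma minimal_moves_subset: "minimal_moves M \<subseteq> M"
  unfolding minimal_moves_def by auto

lemma moves_cover_minimal_moves: "moves_cover (minimal_moves M) M"
  unfolding moves_cover_def
proof
  fix m assume "m \<in> M"
  then obtain m' where "m' \<in> M \<and> fst m' = fst m"
    and least: "\<forall>m''. m'' \<in> M \<and> fst m'' = fst m \<longrightarrow> snd m' \<le> snd m''"
    using ex_has_least_nat[where P = "\<lambda>m'. m' \<in> M \<and> fst m' = fst m" and m = snd] by blast
  then have "m' \<in> minimal_moves M" "snd m' \<le> snd m"
    using \<open>m \<in> M\<close> unfolding minimal_moves_def by auto
  then show "\<exists>m'\<in>minimal_moves M. fst m' = fst m \<and> snd m' \<le> snd m"
    using \<open>m' \<in> M \<and> fst m' = fst m\<close> by blast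
qed

lemma inj_on_fst_minimal_moves: "inj_on fst (minimal_moves M)"
proof (rule inj_onI)
  fix m m' assume "m \<in> minimal_moves M" "m' \<in> minimal_moves M" "fst m = fst m'"
  then have "snd m \<le> snd m'" "snd m' \<le> snd m" unfolding minimal_moves_def by auto
  with \<open>fst m = fst m'\<close> show "m = m'" by (simp add: prod_eq_iff)
qed

lemma card_minimal_moves_le:
  assumes "M \<subseteq> legal_moves Q" and "\<forall>g\<in>Q. length g \<le> k"
  shows "card (minimal_moves M) \<le> k"
proof -
  have "fst ` minimal_moves M \<subseteq> {..<k}"
  proof
    fix i assume "i \<in> fst ` minimal_moves M"
    then obtain m g where "i = fst m" "g \<in> Q" "legal m g"
      using assms(1) minimal_moves_subset unfolding legal_moves_def by blast
    then show "i \<in> {..<k}" using assms(2) unfolding legal_def by force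
  qed
  then have "card (minimal_moves M) \<le> card {..<k}"
    by (rule card_inj_on_le[OF inj_on_fst_minimal_moves]) simp
  then show ?thesis by simp
qed

text \<open>Rulesets A and B may forbid a single classical move; then one further move of M is
  added back, which is why k \<ge> 2 is needed there.\<close>
lemma allowed_bounded_cover:
  assumes al: "allowed r Q M" and len: "\<forall>g\<in>Q. length g \<le> k" and rk: "r = RD \<or> 2 \<le> k"
  obtains M' where "M' \<subseteq> M" "allowed r Q M'" "card M' \<le> k" "moves_cover M' M"
proof (cases "card M \<le> k")
  case True
  then show ?thesis using al that[of M] moves_cover_refl by blast
next
  case False
  have fin: "finite M" and "M \<noteq> {}" and legal: "M \<subseteq> legal_moves Q"
    using al unfolding allowed_def by auto
  define mn where "mn = minimal_moves M"
  have "mn \<subseteq> M" "moves_cover mn M" "card mn \<le> k"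
    unfolding mn_def using minimal_moves_subset moves_cover_minimal_moves
      card_minimal_moves_le[OF legal len] by auto
  have "finite mn" using fin \<open>mn \<subseteq> M\<close> finite_subset by blast
  have "mn \<noteq> {}" using \<open>moves_cover mn M\<close> \<open>M \<noteq> {}\<close> unfolding moves_cover_def by blast
  show ?thesis
  proof (cases "2 \<le> card mn \<or> r = RD")
    case True
    then have "allowed r Q mn" using al \<open>mn \<subseteq> M\<close> \<open>finite mn\<close> \<open>mn \<noteq> {}\<close> legal
      unfolding allowed_def by (cases r) auto
    then show ?thesis using that \<open>mn \<subseteq> M\<close> \<open>card mn \<le> k\<close> \<open>moves_cover mn M\<close> by blast
  next
    case small: False
    moreover have "card mn > 0" using \<open>finite mn\<close> \<open>mn \<noteq> {}\<close> by (simp add: card_gt_0_iff)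
    ultimately have "card mn = 1" "2 \<le> k" using rk by auto
    have "\<not> M \<subseteq> mn"
    proof
      assume "M \<subseteq> mn"
      then have "card M \<le> card mn" by (rule card_mono[OF \<open>finite mn\<close>])
      with False \<open>card mn \<le> k\<close> show False by simp
    qed
    then obtain x where "x \<in> M" "x \<notin> mn" by blast
    define M' where "M' = insert x mn"
    have "card M' = 2" unfolding M'_def using \<open>card mn = 1\<close> \<open>x \<notin> mn\<close> \<open>finite mn\<close> by simp
    moreover have "M' \<subseteq> M" using \<open>mn \<subseteq> M\<close> \<open>x \<in> M\<close> unfolding M'_def by auto
    moreover have "allowed r Q M'"
      using \<open>card M' = 2\<close> \<open>M' \<subseteq> M\<close> legal \<open>finite mn\<close> unfolding allowed_def M'_def
      by (auto split: ruleset.split)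
    moreover have "moves_cover M' M"
      using \<open>moves_cover mn M\<close> unfolding moves_cover_def M'_def by blast
    ultimately show ?thesis using that \<open>2 \<le> k\<close> by simp
  qed
qed

lemma game_bisim_bounded_qopts:
  assumes "r = RD \<or> 2 \<le> k"
  shows "game_bisim (dominating_subset k) (qopts r (\<lambda>_. True)) (qopts r (\<lambda>n. n \<le> k))"
  unfolding game_bisim_def
proof (intro allI impI conjI ballI)
  fix P Q P' assume dom: "dominating_subset k P Q" and "P' \<in> qopts r (\<lambda>_. True) P"
  then obtain M where P': "P' = qresult P M" and "allowed r Q M"
    using allowed_cong_legal_moves[OF dominating_subset_legal_moves[OF dom]]
    unfolding qopts_def by blast
  moreover have "\<forall>g\<in>Q. length g \<le> k" using dom unfolding dominating_subset_def by blast
  ultimately obtain M' where M': "M' \<subseteq> M" "allowed r Q M'" "card M' \<le> k" "moves_cover M' M"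
    using allowed_bounded_cover[OF _ _ assms] by metis
  have "\<forall>m\<in>M'. 1 \<le> snd m" using allowed_snd_pos[OF M'(2)] by blast
  from dominating_subset_qresult[OF dom M'(1) this M'(4)]
  have "dominating_subset k P' (qresult Q M')" unfolding P' .
  moreover have "qresult Q M' \<in> qopts r (\<lambda>n. n \<le> k) Q" using M' unfolding qopts_def by blast
  ultimately show "\<exists>Q'\<in>qopts r (\<lambda>n. n \<le> k) Q. dominating_subset k P' Q'" by blast
next
  fix P Q Q' assume dom: "dominating_subset k P Q" and "Q' \<in> qopts r (\<lambda>n. n \<le> k) Q"
  then obtain M where Q': "Q' = qresult Q M" and "allowed r P M" "allowed r Q M"
    using allowed_cong_legal_moves[OF dominating_subset_legal_moves[OF dom]]
    unfolding qopts_def by blast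
  have "\<forall>m\<in>M. 1 \<le> snd m" using allowed_snd_pos[OF \<open>allowed r Q M\<close>] by blast
  from dominating_subset_qresult[OF dom subset_refl this moves_cover_refl]
  have "dominating_subset k (qresult P M) Q'" unfolding Q' .
  moreover have "qresult P M \<in> qopts r (\<lambda>_. True) P"
    using \<open>allowed r P M\<close> unfolding qopts_def by blast
  ultimately show "\<exists>P'\<in>qopts r (\<lambda>_. True) P. dominating_subset k P' Q'" by blast
qed

theorem corollary2:
  fixes r :: ruleset and k :: nat and Q :: "nat list set"
  assumes "finite Q" and "Q \<noteq> {}"
    and "\<forall>g\<in>Q. length g \<le> k"
    and "r = RD \<or> 2 \<le> k"
  shows "game_equiv (qopts r (\<lambda>_. True)) Q (qopts r (\<lambda>n. n \<le> k)) Q"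
  using game_bisim_bounded_qopts[OF assms(4)] dominating_subset_refl[OF assms(3)]
  by (rule game_equiv_if_bisim)

end
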